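(* Let $n,m,d,k$ be positive integers with $k\le 2^{m-1}$, and let $N=2^n$ (with $N$ large and $d,k\le\sqrt N$). Consider the following decision problem. For a function $f:\{0,1\}^n\to\{0,1\}^m$, let $F=f^{\otimes d}:\{0,1\}^{dn}\to\{0,1\}^{dm}$ be given by $F(x_1,\dots,x_d)=(f(x_1),\dots,f(x_d))$. The algorithm is given access to $F$ only through the oracle unitary $T_F$ acting on $(dn+dm)$ qubits by $T_F\ket{x}\ket{z}=\ket{x}\ket{z\oplus F(x)}$ for $x\in\{0,1\}^{dn}$, $z\in\{0,1\}^{dm}$. It is also given $k$ distinct items $y_1,\dots,y_k\in\{0,1\}^m$. It is promised that either all of the $y_i$ lie in the image of $f$, or exactly $k-1$ of them do, and it must decide (correctly with probability at least $3/4$) whether all $y_i$ lie in the image of $f$. Then every quantum circuit solving this problem uses \[\Omega\left(\sqrt{\frac{Nk}{d\min\{d,k\}}}\right)\] applications of $T_F$.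
   Context: An item $y\in\{0,1\}^m$ is "in the database $f$" if $f(x)=y$ for some $x\in\{0,1\}^n$. Note that $T_F=T_f^{\otimes d}$ up to reordering of qubits, where $T_f\ket{x}\ket{z}=\ket{x}\ket{z\oplus f(x)}$; thus one application of $T_F$ is a parallel query to $d$ copies of the database $f$. The complexity measure is the number of applications of $T_F$; other unitaries (independent of $f$) are free. *)

theory Defs
  imports Complex_Main
begin

text \<open>Bit strings are lists of booleans; a bit string in {0,1}^L is a list of length L.
  f : {0,1}^n -> {0,1}^m is a function on bool lists with length (f x) = m for length x = n.\<close>

definition xor_bits :: "bool list \<Rightarrow> bool list \<Rightarrow> bool list" where
  "xor_bits a b = map2 (\<noteq>) a b"

fun blocks :: "nat \<Rightarrow> nat \<Rightarrow> 'a list \<Rightarrow> 'a list list" where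
  "blocks 0 n xs = []"
| "blocks (Suc d) n xs = take n xs # blocks d n (drop n xs)"

definition tensor_fun :: "nat \<Rightarrow> nat \<Rightarrow> (bool list \<Rightarrow> bool list) \<Rightarrow> bool list \<Rightarrow> bool list" where
  "tensor_fun d n f x = concat (map f (blocks d n x))"

text \<open>Computational basis of the whole register: query register |x>|z> (dn + dm qubits)
  together with a workspace register of dimension W.\<close>
type_synonym basis = "bool list \<times> bool list \<times> nat"
type_synonym state = "basis \<Rightarrow> complex"
type_synonym op = "basis \<Rightarrow> basis \<Rightarrow> complex"

definition Basis :: "nat \<Rightarrow> nat \<Rightarrow> nat \<Rightarrow> nat \<Rightarrow> basis set" where
  "Basis d n m W = {(x, z, w). length x = d * n \<and> length z = d * m \<and> w < W}"

definition apply_op :: "basis set \<Rightarrow> op \<Rightarrow> state \<Rightarrow> state" where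
  "apply_op B U \<psi> = (\<lambda>b. \<Sum>b'\<in>B. U b b' * \<psi> b')"

definition unitary_on :: "basis set \<Rightarrow> op \<Rightarrow> bool" where
  "unitary_on B U \<longleftrightarrow> (\<forall>b\<in>B. \<forall>b'\<in>B.
      (\<Sum>c\<in>B. cnj (U c b) * U c b') = (if b = b' then 1 else 0))"

text \<open>Query T_F |x>|z>|w> = |x>|z xor F(x)>|w>, acting on amplitudes.\<close>
definition query_op :: "(bool list \<Rightarrow> bool list) \<Rightarrow> state \<Rightarrow> state" where
  "query_op F \<psi> = (\<lambda>(x, z, w). \<psi> (x, xor_bits z (F x), w))"

text \<open>Run U_0, then T_F, U_1, then T_F, U_2, ...: a list of T+1 unitaries uses T query_op calls.\<close>
fun run :: "basis set \<Rightarrow> (bool list \<Rightarrow> bool list) \<Rightarrow> op list \<Rightarrow> state \<Rightarrow> state" where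
  "run B F [] \<psi> = \<psi>"
| "run B F [U] \<psi> = apply_op B U \<psi>"
| "run B F (U # V # Us) \<psi> = run B F (V # Us) (query_op F (apply_op B U \<psi>))"

definition init_state :: "nat \<Rightarrow> nat \<Rightarrow> nat \<Rightarrow> state" where
  "init_state d n m = (\<lambda>b. if b = (replicate (d * n) False, replicate (d * m) False, 0) then 1 else 0)"

definition accept_prob ::
  "nat \<Rightarrow> nat \<Rightarrow> nat \<Rightarrow> nat \<Rightarrow> (bool list \<Rightarrow> bool list) \<Rightarrow> op list \<Rightarrow> basis set \<Rightarrow> real" where
  "accept_prob d n m W f Us acc =
     (let B = Basis d n m W;
          \<psi> = run B (tensor_fun d n f) Us (init_state d n m)
      in \<Sum>b\<in>B \<inter> acc. (cmod (\<psi> b))\<^sup>2)"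

definition valid_fun :: "nat \<Rightarrow> nat \<Rightarrow> (bool list \<Rightarrow> bool list) \<Rightarrow> bool" where
  "valid_fun n m f \<longleftrightarrow> (\<forall>x. length x = n \<longrightarrow> length (f x) = m)"

definition image_fun :: "nat \<Rightarrow> (bool list \<Rightarrow> bool list) \<Rightarrow> bool list set" where
  "image_fun n f = f ` {x. length x = n}"

definition valid_items :: "nat \<Rightarrow> nat \<Rightarrow> bool list list \<Rightarrow> bool" where
  "valid_items m k ys \<longleftrightarrow> length ys = k \<and> distinct ys \<and> (\<forall>y\<in>set ys. length y = m)"

text \<open>An algorithm: for each input list of k items ys, a workspace dimension W ys \<ge> 1,
  T+1 unitaries Us ys (so exactly T applications of T_F), and an accepting set acc ys
  of computational basis states.\<close>
definition solves ::
  "nat \<Rightarrow> nat \<Rightarrow> nat \<Rightarrow> nat \<Rightarrow> nat \<Rightarrow> (bool list list \<Rightarrow> nat) \<Rightarrow> (bool list list \<Rightarrow> op list)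
   \<Rightarrow> (bool list list \<Rightarrow> basis set) \<Rightarrow> bool" where
  "solves n m d k T W Us acc \<longleftrightarrow>
     (\<forall>ys. valid_items m k ys \<longrightarrow>
        W ys \<ge> 1 \<and> length (Us ys) = T + 1 \<and>
        (\<forall>U\<in>set (Us ys). unitary_on (Basis d n m (W ys)) U) \<and>
        (\<forall>f. valid_fun n m f \<longrightarrow>
           (set ys \<subseteq> image_fun n f \<longrightarrow> accept_prob d n m (W ys) f (Us ys) (acc ys) \<ge> 3/4) \<and>
           (card (set ys \<inter> image_fun n f) = k - 1 \<longrightarrow>
              accept_prob d n m (W ys) f (Us ys) (acc ys) \<le> 1/4)))"

end

theory Submission
  imports Defs "HOL-Analysis.Convex"
begin

text \<open>
  An adversary argument. Fix the items \<open>y\<^sub>0, \<dots>, y\<^sub>k\<^sub>-\<^sub>1\<close> and a dummy value \<open>e\<close> outside them.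
  An injection \<open>\<pi>\<close> of \<open>{..<k}\<close> into \<open>{0,1}\<^sup>n\<close> gives a yes-instance \<open>f\<^sub>\<pi>\<close> mapping \<open>\<pi> j\<close> to \<open>y\<^sub>j\<close>
  and everything else to \<open>e\<close>; forgetting item \<open>i\<close> gives a no-instance \<open>f\<^sub>\<pi>\<^sub>,\<^sub>i\<close> that differs
  from \<open>f\<^sub>\<pi>\<close> only at the point \<open>\<pi> i\<close>. The progress measure
  \<open>\<Sum>\<^sub>\<pi>\<^sub>,\<^sub>i |\<langle>\<psi>(f\<^sub>\<pi>), \<psi>(f\<^sub>\<pi>\<^sub>,\<^sub>i)\<rangle>|\<close> starts at the number of pairs and must drop
  below \<open>7/8\<close> of it for the algorithm to separate acceptance probabilities \<open>3/4\<close> and \<open>1/4\<close>.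

  A parallel query changes the inner product of a pair only on the query inputs \<open>x\<close>
  whose blocks contain \<open>\<pi> i\<close>; by AM-GM with a free weight \<open>t\<close> the loss is at most
  \<open>t\<close> times the query mass of \<open>\<psi>(f\<^sub>\<pi>)\<close> at \<open>\<pi> i\<close> plus \<open>1/t\<close> times that of \<open>\<psi>(f\<^sub>\<pi>\<^sub>,\<^sub>i)\<close>.
  Since an input has only \<open>d\<close> blocks, the masses of \<open>\<psi>(f\<^sub>\<pi>)\<close> at the \<open>k\<close> points \<open>\<pi> j\<close> sum
  to at most \<open>min d k\<close>. The no-instance \<open>f\<^sub>\<pi>\<^sub>,\<^sub>i\<close> does not depend on \<open>\<pi> i\<close>, so averaging over
  the \<open>N - k + 1\<close> free values of \<open>\<pi> i\<close> bounds the mean mass by \<open>d / (N - k + 1)\<close>.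
  Optimising \<open>t\<close> gives a loss per query of \<open>O(\<surd>(d k min(d,k) / N))\<close> relative to the number
  of pairs, whence \<open>\<Omega>(\<surd>(N k / (d min(d,k))))\<close> queries.
\<close>

section \<open>Amplitude vectors\<close>

definition inner_prod :: "basis set \<Rightarrow> state \<Rightarrow> state \<Rightarrow> complex" where
  "inner_prod B \<psi> \<phi> = (\<Sum>b\<in>B. cnj (\<psi> b) * \<phi> b)"

definition sq_norm :: "basis set \<Rightarrow> state \<Rightarrow> real" where
  "sq_norm B \<psi> = (\<Sum>b\<in>B. (cmod (\<psi> b))\<^sup>2)"

lemma inner_prod_self: "inner_prod B \<psi> \<psi> = of_real (sq_norm B \<psi>)"
  unfolding inner_prod_def sq_norm_def of_real_sum complex_norm_square by (simp add: mult.commute)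

lemma sq_norm_nonneg: "0 \<le> sq_norm B \<psi>"
  unfolding sq_norm_def by (simp add: sum_nonneg)

lemma inner_prod_Cauchy_Schwarz: "(cmod (inner_prod B \<psi> \<phi>))\<^sup>2 \<le> sq_norm B \<psi> * sq_norm B \<phi>"
proof -
  have "cmod (inner_prod B \<psi> \<phi>) \<le> (\<Sum>b\<in>B. cmod (\<psi> b) * cmod (\<phi> b))"
    unfolding inner_prod_def by (rule order_trans[OF norm_sum]) (simp add: norm_mult)
  then have "(cmod (inner_prod B \<psi> \<phi>))\<^sup>2 \<le> (\<Sum>b\<in>B. cmod (\<psi> b) * cmod (\<phi> b))\<^sup>2"
    by (simp add: power_mono)
  also have "\<dots> \<le> sq_norm B \<psi> * sq_norm B \<phi>"
    unfolding sq_norm_def by (rule Cauchy_Schwarz_ineq_sum)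
  finally show ?thesis .
qed

lemma inner_prod_apply_op:
  assumes "finite B" and U: "unitary_on B U"
  shows "inner_prod B (apply_op B U \<psi>) (apply_op B U \<phi>) = inner_prod B \<psi> \<phi>"
proof -
  have "inner_prod B (apply_op B U \<psi>) (apply_op B U \<phi>) =
      (\<Sum>c\<in>B. (\<Sum>b\<in>B. cnj (U c b) * cnj (\<psi> b)) * (\<Sum>b'\<in>B. U c b' * \<phi> b'))"
    unfolding inner_prod_def apply_op_def by (simp add: cnj_sum)
  also have "\<dots> = (\<Sum>c\<in>B. \<Sum>b\<in>B. \<Sum>b'\<in>B. cnj (\<psi> b) * \<phi> b' * (cnj (U c b) * U c b'))"
    unfolding sum_product by (simp add: mult_ac)
  also have "\<dots> = (\<Sum>b\<in>B. \<Sum>b'\<in>B. \<Sum>c\<in>B. cnj (\<psi> b) * \<phi> b' * (cnj (U c b) * U c b'))"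
    by (rule trans[OF sum.swap]) (intro sum.cong refl sum.swap)
  also have "\<dots> = (\<Sum>b\<in>B. \<Sum>b'\<in>B. cnj (\<psi> b) * \<phi> b' * (if b = b' then 1 else 0))"
    using U unfolding unitary_on_def by (simp add: sum_distrib_left[symmetric])
  also have "\<dots> = inner_prod B \<psi> \<phi>"
    using assms(1) unfolding inner_prod_def by (simp add: if_distrib cong: if_cong)
  finally show ?thesis .
qed

lemma sq_norm_apply_op:
  assumes "finite B" and "unitary_on B U"
  shows "sq_norm B (apply_op B U \<psi>) = sq_norm B \<psi>"
  using inner_prod_apply_op[OF assms, of \<psi> \<psi>] by (simp add: inner_prod_self)

lemma separated_unit_vectors_inner_le:
  fixes s u v w :: real
  assumes nonneg: "0 \<le> s" "0 \<le> u" "0 \<le> v" "0 \<le> w"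
    and sq: "s\<^sup>2 + u\<^sup>2 = 1" "v\<^sup>2 + w\<^sup>2 = 1" "3/4 \<le> s\<^sup>2" "v\<^sup>2 \<le> 1/4"
  shows "s * v + u * w \<le> 7/8"
proof -
  have "3/4 \<le> w\<^sup>2" and "u\<^sup>2 \<le> 1/4"
    using sq by linarith+
  then have "(3/4) * (3/4) \<le> s\<^sup>2 * w\<^sup>2" and "u\<^sup>2 * v\<^sup>2 \<le> (1/4) * (1/4)"
    using sq(3,4) by (intro mult_mono; simp)+
  then have sw: "(3/4)\<^sup>2 \<le> (s * w)\<^sup>2" and uv: "(u * v)\<^sup>2 \<le> (1/4)\<^sup>2"
    by (simp_all only: power_mult_distrib power2_eq_square[of "3/4"] power2_eq_square[of "1/4"])
  have "s * w \<ge> 3/4"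
    by (rule power2_le_imp_le[OF sw]) (use nonneg in simp)
  moreover have "u * v \<le> 1/4"
    by (rule power2_le_imp_le[OF uv]) simp
  ultimately have "(1/2)\<^sup>2 \<le> (s * w - u * v)\<^sup>2"
    by (intro power_mono) auto
  moreover have "(s * v + u * w)\<^sup>2 + (s * w - u * v)\<^sup>2 = (s\<^sup>2 + u\<^sup>2) * (v\<^sup>2 + w\<^sup>2)"
    by (simp add: power2_eq_square algebra_simps)
  moreover have "(1/2::real)\<^sup>2 = 1/4" and "(7/8::real)\<^sup>2 = 49/64"
    by (simp_all add: power2_eq_square)
  ultimately have "(s * v + u * w)\<^sup>2 \<le> (7/8)\<^sup>2"
    unfolding sq(1,2) by linarith
  then show ?thesis
    by (rule power2_le_imp_le) simp
qed

lemma norm_inner_prod_le_if_distinguished: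
  assumes "finite B" and "sq_norm B \<psi> = 1" and "sq_norm B \<phi> = 1"
    and "sq_norm (B \<inter> A) \<psi> \<ge> 3/4" and "sq_norm (B \<inter> A) \<phi> \<le> 1/4"
  shows "cmod (inner_prod B \<psi> \<phi>) \<le> 7/8"
proof -
  define s u v w where "s = sqrt (sq_norm (B \<inter> A) \<psi>)" and "u = sqrt (sq_norm (B - A) \<psi>)"
    and "v = sqrt (sq_norm (B \<inter> A) \<phi>)" and "w = sqrt (sq_norm (B - A) \<phi>)"
  have split: "sq_norm B \<chi> = sq_norm (B \<inter> A) \<chi> + sq_norm (B - A) \<chi>" for \<chi>
    unfolding sq_norm_def by (rule sum.Int_Diff[OF assms(1)])
  have nonneg: "0 \<le> s" "0 \<le> u" "0 \<le> v" "0 \<le> w"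
    unfolding s_def u_def v_def w_def by (simp_all add: sq_norm_nonneg)
  have sq: "s\<^sup>2 + u\<^sup>2 = 1" "v\<^sup>2 + w\<^sup>2 = 1" "s\<^sup>2 \<ge> 3/4" "v\<^sup>2 \<le> 1/4"
    using assms(2-) split[of \<psi>] split[of \<phi>]
    unfolding s_def u_def v_def w_def by (simp_all add: sq_norm_nonneg)
  have part: "cmod (inner_prod C \<psi> \<phi>) \<le> sqrt (sq_norm C \<psi>) * sqrt (sq_norm C \<phi>)" for C
    using inner_prod_Cauchy_Schwarz[of C \<psi> \<phi>]
    by (simp add: real_le_rsqrt sq_norm_nonneg flip: real_sqrt_mult)
  have "inner_prod B \<psi> \<phi> = inner_prod (B \<inter> A) \<psi> \<phi> + inner_prod (B - A) \<psi> \<phi>"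
    unfolding inner_prod_def by (rule sum.Int_Diff[OF assms(1)])
  then have "cmod (inner_prod B \<psi> \<phi>) \<le> cmod (inner_prod (B \<inter> A) \<psi> \<phi>) + cmod (inner_prod (B - A) \<psi> \<phi>)"
    by (simp add: norm_triangle_ineq)
  also have "\<dots> \<le> s * v + u * w"
    unfolding s_def u_def v_def w_def by (intro add_mono part)
  also have "\<dots> \<le> 7/8"
    using nonneg sq by (rule separated_unit_vectors_inner_le)
  finally show ?thesis .
qed

section \<open>Registers and queries\<close>

lemma finite_lists_length: "finite {xs :: bool list. length xs = k}"
  using finite_lists_length_eq[of "UNIV :: bool set" k] by simp

lemma card_lists_length: "card {xs :: bool list. length xs = k} = 2 ^ k"
  using card_lists_length_eq[of "UNIV :: bool set" k] by (simp add: card_UNIV_bool)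

definition target_space :: "nat \<Rightarrow> nat \<Rightarrow> (bool list \<times> nat) set" where
  "target_space L W = {z. length z = L} \<times> {..<W}"

definition fiber_inner :: "(bool list \<times> nat) set \<Rightarrow> bool list \<Rightarrow> state \<Rightarrow> state \<Rightarrow> complex" where
  "fiber_inner P x \<psi> \<phi> = (\<Sum>p\<in>P. cnj (\<psi> (x, p)) * \<phi> (x, p))"

definition fiber_sq_norm :: "(bool list \<times> nat) set \<Rightarrow> bool list \<Rightarrow> state \<Rightarrow> real" where
  "fiber_sq_norm P x \<psi> = (\<Sum>p\<in>P. (cmod (\<psi> (x, p)))\<^sup>2)"

lemma finite_target_space: "finite (target_space L W)"
  unfolding target_space_def using finite_lists_length by simp

lemma Basis_eq_Times: "Defs.Basis d n m W = {x. length x = d * n} \<times> target_space (d * m) W"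
  unfolding Basis_def target_space_def by auto

lemma finite_Basis: "finite (Defs.Basis d n m W)"
  unfolding Basis_eq_Times using finite_lists_length finite_target_space by simp

lemma sq_norm_init_state:
  assumes "1 \<le> W"
  shows "sq_norm (Defs.Basis d n m W) (init_state d n m) = 1"
proof -
  let ?b\<^sub>0 = "(replicate (d * n) False, replicate (d * m) False, 0 :: nat)"
  have "?b\<^sub>0 \<in> Defs.Basis d n m W"
    using assms by (simp add: Basis_def)
  then show ?thesis
    unfolding sq_norm_def init_state_def using finite_Basis
    by (simp add: if_distrib[of "\<lambda>z. (cmod z)\<^sup>2"] cong: if_cong)
qed

lemma accept_prob_eq_sq_norm: "accept_prob d n m W f Us A
    = sq_norm (Defs.Basis d n m W \<inter> A) (run (Defs.Basis d n m W) (tensor_fun d n f) Us (init_state d n m))"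
  unfolding accept_prob_def sq_norm_def Let_def ..

lemma inner_prod_Times:
  "finite X \<Longrightarrow> finite P \<Longrightarrow> inner_prod (X \<times> P) \<psi> \<phi> = (\<Sum>x\<in>X. fiber_inner P x \<psi> \<phi>)"
  unfolding inner_prod_def fiber_inner_def by (simp add: sum.cartesian_product case_prod_eta)

lemma sq_norm_Times:
  "finite X \<Longrightarrow> finite P \<Longrightarrow> sq_norm (X \<times> P) \<psi> = (\<Sum>x\<in>X. fiber_sq_norm P x \<psi>)"
  unfolding sq_norm_def fiber_sq_norm_def by (simp add: sum.cartesian_product case_prod_eta)

lemma fiber_sq_norm_nonneg: "0 \<le> fiber_sq_norm P x \<psi>"
  unfolding fiber_sq_norm_def by (simp add: sum_nonneg)

lemma norm_fiber_inner_le: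
  assumes "t > 0"
  shows "cmod (fiber_inner P x \<psi> \<phi>) \<le> (t * fiber_sq_norm P x \<psi> + fiber_sq_norm P x \<phi> / t) / 2"
proof -
  have "cmod (fiber_inner P x \<psi> \<phi>) \<le> (\<Sum>p\<in>P. cmod (\<psi> (x, p)) * cmod (\<phi> (x, p)))"
    unfolding fiber_inner_def by (rule order_trans[OF norm_sum]) (simp add: norm_mult)
  also have "\<dots> \<le> (\<Sum>p\<in>P. (t * (cmod (\<psi> (x, p)))\<^sup>2 + (cmod (\<phi> (x, p)))\<^sup>2 / t) / 2)"
  proof (rule sum_mono)
    fix p
    have "0 \<le> (t * cmod (\<psi> (x, p)) - cmod (\<phi> (x, p)))\<^sup>2 / t"
      using assms by simp
    then show "cmod (\<psi> (x, p)) * cmod (\<phi> (x, p))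
        \<le> (t * (cmod (\<psi> (x, p)))\<^sup>2 + (cmod (\<phi> (x, p)))\<^sup>2 / t) / 2"
      using assms by (simp add: power2_eq_square field_simps)
  qed
  also have "\<dots> = (t * fiber_sq_norm P x \<psi> + fiber_sq_norm P x \<phi> / t) / 2"
    unfolding fiber_sq_norm_def
    by (simp add: sum.distrib sum_distrib_left sum_divide_distrib add_divide_distrib)
  finally show ?thesis .
qed

lemma length_xor_bits [simp]: "length (xor_bits a b) = min (length a) (length b)"
  by (simp add: xor_bits_def)

lemma xor_bits_xor_bits: "length z = length v \<Longrightarrow> xor_bits (xor_bits z v) v = z"
  by (induction z v rule: list_induct2) (auto simp: xor_bits_def)

lemma sum_target_space_xor:
  assumes "length v = L"
  shows "(\<Sum>p\<in>target_space L W. h (xor_bits (fst p) v, snd p)) = (\<Sum>p\<in>target_space L W. h p)"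
  by (rule sum.reindex_bij_witness[where i = "\<lambda>p. (xor_bits (fst p) v, snd p)"
        and j = "\<lambda>p. (xor_bits (fst p) v, snd p)"])
    (use assms in \<open>auto simp: target_space_def xor_bits_xor_bits\<close>)

lemma query_op_apply: "query_op F \<psi> (x, p) = \<psi> (x, xor_bits (fst p) (F x), snd p)"
  unfolding query_op_def by (cases p) simp

lemma fiber_sq_norm_query_op:
  assumes "length (F x) = L"
  shows "fiber_sq_norm (target_space L W) x (query_op F \<psi>) = fiber_sq_norm (target_space L W) x \<psi>"
  unfolding fiber_sq_norm_def query_op_apply
  using sum_target_space_xor[OF assms, where h = "\<lambda>p. (cmod (\<psi> (x, p)))\<^sup>2"] by simp

lemma fiber_inner_query_op:
  assumes "length (F x) = L" and "G x = F x"
  shows "fiber_inner (target_space L W) x (query_op F \<psi>) (query_op G \<phi>)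
       = fiber_inner (target_space L W) x \<psi> \<phi>"
  unfolding fiber_inner_def query_op_apply
  using sum_target_space_xor[OF assms(1), where h = "\<lambda>p. cnj (\<psi> (x, p)) * \<phi> (x, p)"] assms(2)
  by simp

lemma sq_norm_query_op:
  assumes "finite X" and "\<forall>x\<in>X. length (F x) = L"
  shows "sq_norm (X \<times> target_space L W) (query_op F \<psi>) = sq_norm (X \<times> target_space L W) \<psi>"
  using assms by (simp add: sq_norm_Times finite_target_space fiber_sq_norm_query_op)

lemma norm_inner_prod_query_op_ge:
  fixes W :: nat
  assumes X: "finite X" and "H \<subseteq> X" and agree: "\<forall>x\<in>X - H. F x = G x"
    and F: "\<forall>x\<in>X. length (F x) = L" and G: "\<forall>x\<in>X. length (G x) = L" and "t > 0"
  defines "P \<equiv> target_space L W"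
  shows "cmod (inner_prod (X \<times> P) (query_op F \<psi>) (query_op G \<phi>))
       \<ge> cmod (inner_prod (X \<times> P) \<psi> \<phi>) - (\<Sum>x\<in>H. t * fiber_sq_norm P x \<psi> + fiber_sq_norm P x \<phi> / t)"
proof -
  define \<delta> where "\<delta> x = fiber_inner P x (query_op F \<psi>) (query_op G \<phi>) - fiber_inner P x \<psi> \<phi>" for x
  have "inner_prod (X \<times> P) (query_op F \<psi>) (query_op G \<phi>) - inner_prod (X \<times> P) \<psi> \<phi> = (\<Sum>x\<in>X. \<delta> x)"
    using X by (simp add: P_def \<delta>_def inner_prod_Times finite_target_space sum_subtractf)
  also have "\<dots> = (\<Sum>x\<in>H. \<delta> x)"
    using assms(2) agree F
    by (intro sum.mono_neutral_right[OF X]) (auto simp: \<delta>_def P_def fiber_inner_query_op)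
  finally have diff: "inner_prod (X \<times> P) (query_op F \<psi>) (query_op G \<phi>) - inner_prod (X \<times> P) \<psi> \<phi>
      = (\<Sum>x\<in>H. \<delta> x)" .
  have "cmod (\<delta> x) \<le> t * fiber_sq_norm P x \<psi> + fiber_sq_norm P x \<phi> / t" if "x \<in> H" for x
  proof -
    have "cmod (\<delta> x) \<le> cmod (fiber_inner P x (query_op F \<psi>) (query_op G \<phi>)) + cmod (fiber_inner P x \<psi> \<phi>)"
      unfolding \<delta>_def by (rule norm_triangle_ineq4)
    also have "\<dots> \<le> (t * fiber_sq_norm P x (query_op F \<psi>) + fiber_sq_norm P x (query_op G \<phi>) / t) / 2
        + (t * fiber_sq_norm P x \<psi> + fiber_sq_norm P x \<phi> / t) / 2"
      using \<open>t > 0\<close> by (intro add_mono norm_fiber_inner_le)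
    also have "\<dots> = t * fiber_sq_norm P x \<psi> + fiber_sq_norm P x \<phi> / t"
      using that assms(2) F G by (auto simp: P_def fiber_sq_norm_query_op)
    finally show ?thesis .
  qed
  then have "cmod (\<Sum>x\<in>H. \<delta> x) \<le> (\<Sum>x\<in>H. t * fiber_sq_norm P x \<psi> + fiber_sq_norm P x \<phi> / t)"
    by (intro order_trans[OF norm_sum] sum_mono)
  then show ?thesis
    using norm_triangle_ineq2[of "inner_prod (X \<times> P) \<psi> \<phi>" "inner_prod (X \<times> P) (query_op F \<psi>) (query_op G \<phi>)"]
    unfolding norm_minus_commute[of "inner_prod (X \<times> P) \<psi> \<phi>"] diff by linarith
qed

lemma sq_norm_run:
  assumes X: "finite X" and F: "\<forall>x\<in>X. length (F x) = L"
    and U: "\<forall>U\<in>set Us. unitary_on (X \<times> target_space L W) U"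
  shows "sq_norm (X \<times> target_space L W) (run (X \<times> target_space L W) F Us \<psi>)
       = sq_norm (X \<times> target_space L W) \<psi>"
  using U
proof (induction Us arbitrary: \<psi> rule: induct_list012)
  case (3 U V Us)
  with X F show ?case
    by (simp add: sq_norm_apply_op sq_norm_query_op finite_target_space)
qed (simp_all add: X finite_target_space sq_norm_apply_op)

section \<open>Injective maps\<close>

definition inj_maps :: "'i set \<Rightarrow> 'p set \<Rightarrow> ('i \<Rightarrow> 'p) set" where
  "inj_maps K P = {\<pi> \<in> K \<rightarrow>\<^sub>E P. inj_on \<pi> K}"

lemma finite_inj_maps: "finite K \<Longrightarrow> finite P \<Longrightarrow> finite (inj_maps K P)"
  unfolding inj_maps_def by (rule finite_subset[of _ "K \<rightarrow>\<^sub>E P"]) (auto intro: finite_PiE)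

lemma inj_maps_nonempty:
  assumes "finite K" and "finite P" and "card K \<le> card P"
  shows "inj_maps K P \<noteq> {}"
proof -
  obtain f where "f ` K \<subseteq> P" and "inj_on f K"
    using card_le_inj[OF assms] by blast
  then have "restrict f K \<in> inj_maps K P"
    by (auto simp: inj_maps_def inj_on_def)
  then show ?thesis by blast
qed

lemma fun_upd_in_inj_maps:
  assumes "\<pi> \<in> inj_maps K P" and "i \<in> K" and "j \<in> P - \<pi> ` (K - {i})"
  shows "\<pi>(i := j) \<in> inj_maps K P"
proof -
  have "\<pi>(i := j) \<in> insert i K \<rightarrow>\<^sub>E P"
    using assms by (intro PiE_fun_upd) (auto simp: inj_maps_def)
  moreover have "inj_on (\<pi>(i := j)) K"
    using assms unfolding inj_maps_def inj_on_def by auto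
  ultimately show ?thesis
    using assms(2) by (simp add: inj_maps_def insert_absorb)
qed

lemma card_free_values:
  assumes "\<pi> \<in> inj_maps K P" and "i \<in> K" and "finite K" and "finite P"
  shows "card (P - \<pi> ` (K - {i})) = card P - (card K - 1)"
proof -
  have sub: "\<pi> ` (K - {i}) \<subseteq> P" and inj: "inj_on \<pi> (K - {i})"
    using assms(1) by (auto simp: inj_maps_def inj_on_def)
  then show ?thesis
    using card_Diff_subset[OF finite_subset[OF sub assms(4)] sub] card_image[OF inj] assms(2,3)
    by simp
qed

lemma sum_inj_maps_reassign:
  assumes "i \<in> K" and "finite K" and "finite P"
  shows "(\<Sum>\<pi>\<in>inj_maps K P. \<Sum>j\<in>P - \<pi> ` (K - {i}). A (\<pi>(i := j)) (\<pi> i))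
       = (\<Sum>\<pi>\<in>inj_maps K P. \<Sum>j\<in>P - \<pi> ` (K - {i}). A \<pi> j)"
proof -
  let ?Q = "Sigma (inj_maps K P) (\<lambda>\<pi>. P - \<pi> ` (K - {i}))"
  let ?s = "\<lambda>(\<pi>, j). (\<pi>(i := j), \<pi> i)"
  have img: "(\<pi>(i := j)) ` (K - {i}) = \<pi> ` (K - {i})" for \<pi> j
    by auto
  have "?s q \<in> ?Q" if "q \<in> ?Q" for q
  proof -
    obtain \<pi> j where q: "q = (\<pi>, j)" and \<pi>: "\<pi> \<in> inj_maps K P" and j: "j \<in> P - \<pi> ` (K - {i})"
      using \<open>q \<in> ?Q\<close> by auto
    have "\<pi> i \<in> P - \<pi> ` (K - {i})"
      using \<pi> assms by (auto simp: inj_maps_def inj_on_def)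
    then show ?thesis
      using fun_upd_in_inj_maps[OF \<pi> assms(1) j] q img by auto
  qed
  moreover have "?s (?s q) = q" for q
    by (cases q) auto
  ultimately have "(\<Sum>q\<in>?Q. A (fst (?s q)) (snd (?s q))) = (\<Sum>q\<in>?Q. A (fst q) (snd q))"
    by (intro sum.reindex_bij_witness[where i = ?s and j = ?s]) auto
  moreover have "finite (inj_maps K P)" and "\<forall>\<pi>. finite (P - \<pi> ` (K - {i}))"
    using assms(2,3) by (simp_all add: finite_inj_maps)
  ultimately show ?thesis
    by (simp add: sum.Sigma split_def)
qed

lemma sum_inj_maps_at_le:
  fixes g :: "('i \<Rightarrow> 'p) \<Rightarrow> 'p \<Rightarrow> real"
  assumes "i \<in> K" and "finite K" and "finite P"
    and invariant: "\<And>\<pi> j. \<pi> \<in> inj_maps K P \<Longrightarrow> j \<in> P - \<pi> ` (K - {i}) \<Longrightarrow> g (\<pi>(i := j)) = g \<pi>"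
    and bound: "\<And>\<pi>. \<pi> \<in> inj_maps K P \<Longrightarrow> (\<Sum>j\<in>P - \<pi> ` (K - {i}). g \<pi> j) \<le> c"
  shows "real (card P - (card K - 1)) * (\<Sum>\<pi>\<in>inj_maps K P. g \<pi> (\<pi> i)) \<le> c * card (inj_maps K P)"
proof -
  have "real (card P - (card K - 1)) * (\<Sum>\<pi>\<in>inj_maps K P. g \<pi> (\<pi> i))
      = (\<Sum>\<pi>\<in>inj_maps K P. \<Sum>j\<in>P - \<pi> ` (K - {i}). g \<pi> (\<pi> i))"
    using assms(1-3) by (simp add: sum_distrib_left card_free_values)
  also have "\<dots> = (\<Sum>\<pi>\<in>inj_maps K P. \<Sum>j\<in>P - \<pi> ` (K - {i}). g (\<pi>(i := j)) (\<pi> i))"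
    using invariant by simp
  also have "\<dots> = (\<Sum>\<pi>\<in>inj_maps K P. \<Sum>j\<in>P - \<pi> ` (K - {i}). g \<pi> j)"
    using assms(1-3) by (rule sum_inj_maps_reassign)
  also have "\<dots> \<le> (\<Sum>\<pi>\<in>inj_maps K P. c)"
    using bound by (rule sum_mono)
  finally show ?thesis
    by (simp add: mult.commute)
qed

lemma sum_hit_mass_le:
  fixes w :: "'x \<Rightarrow> real"
  assumes "finite X" and "finite S" and "\<And>x. x \<in> X \<Longrightarrow> 0 \<le> w x"
    and "\<And>x. x \<in> X \<Longrightarrow> card (S \<inter> hits x) \<le> c"
  shows "(\<Sum>p\<in>S. \<Sum>x\<in>{x \<in> X. p \<in> hits x}. w x) \<le> c * (\<Sum>x\<in>X. w x)"
proof -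
  have "(\<Sum>p\<in>S. \<Sum>x\<in>{x \<in> X. p \<in> hits x}. w x) = (\<Sum>p\<in>S. \<Sum>x\<in>X. if p \<in> hits x then w x else 0)"
    using assms(1) by (simp add: sum.inter_filter)
  also have "\<dots> = (\<Sum>x\<in>X. \<Sum>p\<in>S. if p \<in> hits x then w x else 0)"
    by (rule sum.swap)
  also have "\<dots> = (\<Sum>x\<in>X. w x * card (S \<inter> hits x))"
    using assms(2) by (simp add: sum.inter_filter[symmetric] Int_def mult.commute)
  also have "\<dots> \<le> (\<Sum>x\<in>X. w x * c)"
    using assms(3,4) by (intro sum_mono mult_left_mono) auto
  finally show ?thesis
    by (simp add: sum_distrib_left mult.commute)
qed

section \<open>Blocks and planted functions\<close>

lemma length_blocks [simp]: "length (blocks d n xs) = d"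
  by (induction d arbitrary: xs) simp_all

lemma length_in_blocks: "length xs = d * n \<Longrightarrow> b \<in> set (blocks d n xs) \<Longrightarrow> length b = n"
proof (induction d arbitrary: xs)
  case (Suc d)
  then show ?case
    using Suc.IH[of "drop n xs"] by auto
qed simp

lemma card_set_blocks_le: "card (set (blocks d n xs)) \<le> d"
  using card_length[of "blocks d n xs"] by simp

lemma length_tensor_fun:
  assumes "valid_fun n m f" and "length x = d * n"
  shows "length (tensor_fun d n f x) = d * m"
proof -
  have "length (tensor_fun d n f x) = (\<Sum>b\<leftarrow>blocks d n x. m)"
    unfolding tensor_fun_def length_concat map_map
    using assms length_in_blocks[OF assms(2)] by (intro arg_cong[where f = sum_list] map_cong) (auto simp: valid_fun_def)
  then show ?thesis
    by (simp add: sum_list_triv)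
qed

lemma tensor_fun_cong:
  "(\<And>b. b \<in> set (blocks d n x) \<Longrightarrow> f b = g b) \<Longrightarrow> tensor_fun d n f x = tensor_fun d n g x"
  unfolding tensor_fun_def by (metis map_cong)

definition planted_fun :: "bool list list \<Rightarrow> bool list \<Rightarrow> nat set \<Rightarrow> (nat \<Rightarrow> bool list) \<Rightarrow> bool list \<Rightarrow> bool list" where
  "planted_fun ys e S \<pi> x = (if x \<in> \<pi> ` S then ys ! the_inv_into S \<pi> x else e)"

lemma planted_fun_at: "inj_on \<pi> S \<Longrightarrow> j \<in> S \<Longrightarrow> planted_fun ys e S \<pi> (\<pi> j) = ys ! j"
  by (simp add: planted_fun_def the_inv_into_f_f)

lemma planted_fun_outside: "x \<notin> \<pi> ` S \<Longrightarrow> planted_fun ys e S \<pi> x = e"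
  by (simp add: planted_fun_def)

lemma planted_fun_cong:
  assumes "\<And>i. i \<in> S \<Longrightarrow> \<pi> i = \<pi>' i"
  shows "planted_fun ys e S \<pi> = planted_fun ys e S \<pi>'"
proof -
  have "\<pi> ` S = \<pi>' ` S"
    using assms by (rule image_cong[OF refl])
  moreover have "the_inv_into S \<pi> = the_inv_into S \<pi>'"
    unfolding the_inv_into_def using assms by (intro ext arg_cong[where f = The]) auto
  ultimately show ?thesis
    unfolding planted_fun_def by (simp only:)
qed

lemma length_planted_fun:
  assumes "inj_on \<pi> S" and "S \<subseteq> {..<length ys}" and "\<forall>y\<in>set ys. length y = m" and "length e = m"
  shows "length (planted_fun ys e S \<pi> x) = m"
  using assms the_inv_into_into[OF assms(1), of x S] by (auto simp: planted_fun_def)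

lemma planted_fun_Diff:
  assumes "inj_on \<pi> K" and "i \<in> K" and "x \<noteq> \<pi> i"
  shows "planted_fun ys e (K - {i}) \<pi> x = planted_fun ys e K \<pi> x"
proof (cases "x \<in> \<pi> ` K")
  case True
  then obtain j where "j \<in> K - {i}" and "x = \<pi> j"
    using assms(3) by auto
  then show ?thesis
    using assms(1,2) by (simp add: planted_fun_at inj_on_diff)
next
  case False
  then show ?thesis
    by (metis Diff_subset image_mono planted_fun_outside subsetD)
qed

lemma set_Int_image_planted_fun:
  assumes "inj_on \<pi> S" and "\<pi> ` S \<subseteq> {x. length x = n}" and "S \<subseteq> {..<length ys}" and "e \<notin> set ys"
  shows "set ys \<inter> image_fun n (planted_fun ys e S \<pi>) = (\<lambda>j. ys ! j) ` S"
proof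
  show "set ys \<inter> image_fun n (planted_fun ys e S \<pi>) \<subseteq> (\<lambda>j. ys ! j) ` S"
  proof
    fix y assume y: "y \<in> set ys \<inter> image_fun n (planted_fun ys e S \<pi>)"
    then obtain x where x: "y = planted_fun ys e S \<pi> x"
      by (auto simp: image_fun_def)
    have "x \<in> \<pi> ` S"
    proof (rule ccontr)
      assume "x \<notin> \<pi> ` S"
      then have "y = e"
        using x by (simp add: planted_fun_outside)
      then show False
        using y assms(4) by simp
    qed
    then show "y \<in> (\<lambda>j. ys ! j) ` S"
      using x assms(1) by (auto simp: planted_fun_at)
  qed
  show "(\<lambda>j. ys ! j) ` S \<subseteq> set ys \<inter> image_fun n (planted_fun ys e S \<pi>)"
  proof (rule image_subsetI)
    fix j assume j: "j \<in> S"
    then have "ys ! j = planted_fun ys e S \<pi> (\<pi> j)" and "\<pi> j \<in> {x. length x = n}"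
      using assms(1,2) by (auto simp: planted_fun_at)
    then have "ys ! j \<in> image_fun n (planted_fun ys e S \<pi>)"
      unfolding image_fun_def by (rule image_eqI)
    moreover have "ys ! j \<in> set ys"
      using j assms(3) by auto
    ultimately show "ys ! j \<in> set ys \<inter> image_fun n (planted_fun ys e S \<pi>)"
      by blast
  qed
qed

lemma exists_items:
  assumes "0 < m" and "k \<le> 2 ^ (m - 1)"
  obtains ys e where "valid_items m k ys" and "length e = m" and "e \<notin> set ys"
proof -
  let ?Y = "{y :: bool list. length y = m}"
  have "(2::nat) ^ (m - 1) < 2 ^ m"
    using assms(1) by simp
  then have "k < card ?Y"
    using assms(2) card_lists_length[of m] by linarith
  then obtain A where A: "A \<subseteq> ?Y" "card A = k"
    using obtain_subset_with_card_n[of k ?Y] by auto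
  then have "finite A"
    using finite_lists_length finite_subset by blast
  then obtain ys where ys: "set ys = A" "distinct ys"
    using finite_distinct_list by auto
  have "\<not> ?Y \<subseteq> A"
    using \<open>k < card ?Y\<close> A \<open>finite A\<close> card_mono by fastforce
  then obtain e where "e \<in> ?Y - A"
    by blast
  moreover have "valid_items m k ys"
    unfolding valid_items_def using ys A distinct_card by fastforce
  ultimately show ?thesis
    using that ys by auto
qed

lemma le_of_le_sqrt:
  fixes k N :: nat
  assumes "real k \<le> sqrt N"
  shows "k \<le> N" and "2 * (k - 1) \<le> N"
proof -
  have "real k ^ 2 \<le> sqrt N ^ 2"
    using assms by (intro power_mono) simp_all
  then have "k * k \<le> N"
    by (simp add: power2_eq_square flip: of_nat_mult)
  moreover have "k \<le> k * k" and "2 * (k - 1) \<le> k * k"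
    by (cases k; simp)+
  ultimately show "k \<le> N" and "2 * (k - 1) \<le> N"
    by linarith+
qed

lemma le_sqrt_of_trade_off:
  fixes k l d M N T :: real
  assumes pos: "0 < k" "0 < l" "0 < d" "0 < M" and "N \<le> 2 * M"
    and trade_off: "\<And>t. 0 < t \<Longrightarrow> k / 8 \<le> T * (t * l + d * k / (t * M))"
  shows "sqrt (N * k / (d * l)) / 32 \<le> T"
proof -
  define t where "t = sqrt (d * k / (l * M))"
  define s where "s = sqrt (d * k * l / M)"
  have "t > 0" and "s > 0"
    using pos by (simp_all add: t_def s_def)
  have "t * l = s" and "d * k / (t * M) = s"
    using pos by (simp_all add: t_def s_def real_sqrt_divide real_sqrt_mult field_simps)
  then have "k \<le> s * (16 * T)"
    using trade_off[OF \<open>t > 0\<close>] by (simp add: mult_ac)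
  moreover have "k = s * sqrt (M * k / (d * l))"
    using pos by (simp add: s_def flip: real_sqrt_mult)
  ultimately have "sqrt (M * k / (d * l)) \<le> 16 * T"
    using \<open>s > 0\<close> by (metis mult_le_cancel_left_pos)
  moreover have "sqrt (N * k / (d * l)) \<le> 2 * sqrt (M * k / (d * l))"
  proof -
    have "sqrt (N * k / (d * l)) \<le> sqrt (4 * (M * k / (d * l)))"
      using pos assms(5) by (intro real_sqrt_le_mono) (simp add: field_simps)
    also have "\<dots> = 2 * sqrt (M * k / (d * l))"
      by (simp only: real_sqrt_mult real_sqrt_four)
    finally show ?thesis .
  qed
  ultimately show ?thesis
    by linarith
qed

section \<open>The hard instances\<close>

locale hard_instances =
  fixes n m d k W :: nat and ys :: "bool list list" and e :: "bool list"
  assumes items: "valid_items m k ys" and e_length: "length e = m" and e_notin: "e \<notin> set ys"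
    and k_le: "k \<le> 2 ^ n"
begin

abbreviation register :: "basis set" where
  "register \<equiv> Defs.Basis d n m W"

abbreviation inputs :: "bool list set" where
  "inputs \<equiv> {x. length x = d * n}"

abbreviation targets :: "(bool list \<times> nat) set" where
  "targets \<equiv> target_space (d * m) W"

abbreviation placements :: "(nat \<Rightarrow> bool list) set" where
  "placements \<equiv> inj_maps {..<k} {p. length p = n}"

definition yes_oracle :: "(nat \<Rightarrow> bool list) \<Rightarrow> bool list \<Rightarrow> bool list" where
  "yes_oracle \<pi> = tensor_fun d n (planted_fun ys e {..<k} \<pi>)"

definition no_oracle :: "(nat \<Rightarrow> bool list) \<Rightarrow> nat \<Rightarrow> bool list \<Rightarrow> bool list" where
  "no_oracle \<pi> i = tensor_fun d n (planted_fun ys e ({..<k} - {i}) \<pi>)"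

definition valid_oracle :: "(bool list \<Rightarrow> bool list) \<Rightarrow> bool" where
  "valid_oracle F \<longleftrightarrow> (\<forall>x\<in>inputs. length (F x) = d * m)"

text \<open>Families of states are indexed by the oracle: after a fixed sequence of unitaries and
  queries the state depends only on the oracle. Queries act unitarily only for oracles with
  outputs of the right length, hence the restriction in \<open>normalized\<close>.\<close>

definition normalized :: "((bool list \<Rightarrow> bool list) \<Rightarrow> state) \<Rightarrow> bool" where
  "normalized \<Psi> \<longleftrightarrow> (\<forall>F. valid_oracle F \<longrightarrow> sq_norm register (\<Psi> F) = 1)"

definition progress :: "((bool list \<Rightarrow> bool list) \<Rightarrow> state) \<Rightarrow> real" where
  "progress \<Psi> = (\<Sum>\<pi>\<in>placements. \<Sum>i<k.
     cmod (inner_prod register (\<Psi> (yes_oracle \<pi>)) (\<Psi> (no_oracle \<pi> i))))"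

definition query_mass :: "state \<Rightarrow> bool list \<Rightarrow> real" where
  "query_mass \<psi> p = (\<Sum>x\<in>{x \<in> inputs. p \<in> set (blocks d n x)}. fiber_sq_norm targets x \<psi>)"

definition query_cost :: "real \<Rightarrow> real" where
  "query_cost t = card placements * (t * real (min d k) + real d * k / (t * real (2 ^ n - (k - 1))))"

lemma finite_inputs: "finite inputs"
  by (rule finite_lists_length)

lemma register_eq: "register = inputs \<times> targets"
  by (rule Basis_eq_Times)

lemma finite_placements: "finite placements"
  by (simp add: finite_inj_maps finite_lists_length)

lemma card_placements_pos: "card placements > 0"
  using inj_maps_nonempty[of "{..<k}" "{p :: bool list. length p = n}"] k_le finite_placements
  by (simp add: finite_lists_length card_lists_length card_gt_0_iff)

lemma free_points_pos: "0 < 2 ^ n - (k - 1)"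
  using k_le by (cases k) auto

lemma placement_inj_on:
  assumes "\<pi> \<in> placements" and "S \<subseteq> {..<k}"
  shows "inj_on \<pi> S" and "\<pi> ` S \<subseteq> {p. length p = n}"
  using assms by (auto simp: inj_maps_def intro: inj_on_subset)

lemma length_ys: "length ys = k"
  using items by (simp add: valid_items_def)

lemma distinct_ys: "distinct ys"
  using items by (simp add: valid_items_def)

lemma length_in_ys: "\<forall>y\<in>set ys. length y = m"
  using items by (simp add: valid_items_def)

lemma valid_planted_fun:
  assumes "\<pi> \<in> placements" and "S \<subseteq> {..<k}"
  shows "valid_fun n m (planted_fun ys e S \<pi>)"
  using placement_inj_on[OF assms] assms(2) length_ys length_in_ys e_length
  by (auto simp: valid_fun_def intro!: length_planted_fun)

lemma valid_yes_oracle: "\<pi> \<in> placements \<Longrightarrow> valid_oracle (yes_oracle \<pi>)"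
  by (simp add: valid_oracle_def yes_oracle_def length_tensor_fun valid_planted_fun)

lemma valid_no_oracle: "\<pi> \<in> placements \<Longrightarrow> valid_oracle (no_oracle \<pi> i)"
  by (simp add: valid_oracle_def no_oracle_def length_tensor_fun valid_planted_fun)

lemma yes_no_oracle_agree:
  assumes "\<pi> \<in> placements" and "i < k" and "\<pi> i \<notin> set (blocks d n x)"
  shows "yes_oracle \<pi> x = no_oracle \<pi> i x"
  unfolding yes_oracle_def no_oracle_def
  using assms placement_inj_on[OF assms(1) order_refl]
  by (intro tensor_fun_cong) (metis lessThan_iff planted_fun_Diff)

lemma no_oracle_fun_upd: "no_oracle (\<pi>(i := j)) i = no_oracle \<pi> i"
  unfolding no_oracle_def by (subst planted_fun_cong[of _ _ \<pi>]) auto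

lemma image_nth_ys: "(\<lambda>j. ys ! j) ` {..<k} = set ys"
  using length_ys by (auto simp: in_set_conv_nth)

lemma set_ys_subset_image_yes:
  assumes "\<pi> \<in> placements"
  shows "set ys \<subseteq> image_fun n (planted_fun ys e {..<k} \<pi>)"
proof -
  have "set ys \<inter> image_fun n (planted_fun ys e {..<k} \<pi>) = (\<lambda>j. ys ! j) ` {..<k}"
    using placement_inj_on[OF assms order_refl] length_ys
    by (intro set_Int_image_planted_fun[OF _ _ _ e_notin]) auto
  then show ?thesis
    using image_nth_ys by blast
qed

lemma card_set_ys_Int_image_no:
  assumes "\<pi> \<in> placements" and "i < k"
  shows "card (set ys \<inter> image_fun n (planted_fun ys e ({..<k} - {i}) \<pi>)) = k - 1"
proof -
  have "set ys \<inter> image_fun n (planted_fun ys e ({..<k} - {i}) \<pi>) = (\<lambda>j. ys ! j) ` ({..<k} - {i})"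
    using placement_inj_on[OF assms(1)] length_ys
    by (intro set_Int_image_planted_fun[OF _ _ _ e_notin]) auto
  moreover have "inj_on (\<lambda>j. ys ! j) ({..<k} - {i})"
    using length_ys distinct_ys by (auto simp: inj_on_def nth_eq_iff_index_eq)
  ultimately show ?thesis
    using assms(2) by (simp add: card_image)
qed

lemma normalized_init: "1 \<le> W \<Longrightarrow> normalized (\<lambda>_. init_state d n m)"
  by (simp add: normalized_def sq_norm_init_state)

lemma normalized_apply_op:
  "unitary_on register U \<Longrightarrow> normalized \<Psi> \<Longrightarrow> normalized (\<lambda>F. apply_op register U (\<Psi> F))"
  unfolding normalized_def by (simp add: sq_norm_apply_op[OF finite_Basis])

lemma normalized_query_op: "normalized \<Psi> \<Longrightarrow> normalized (\<lambda>F. query_op F (\<Psi> F))"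
  unfolding normalized_def valid_oracle_def register_eq
  by (simp add: sq_norm_query_op[OF finite_inputs])

lemma normalized_run:
  assumes "\<forall>U\<in>set Us. unitary_on register U" and "normalized \<Psi>"
  shows "normalized (\<lambda>F. run register F Us (\<Psi> F))"
  using assms(2) sq_norm_run[OF finite_inputs _ assms(1)[unfolded register_eq]]
  by (simp add: normalized_def valid_oracle_def register_eq)

lemma progress_init: "1 \<le> W \<Longrightarrow> progress (\<lambda>_. init_state d n m) = card placements * k"
  by (simp add: progress_def inner_prod_self sq_norm_init_state)

lemma progress_apply_op:
  assumes "unitary_on register U"
  shows "progress (\<lambda>F. apply_op register U (\<Psi> F)) = progress \<Psi>"
  unfolding progress_def by (simp add: inner_prod_apply_op[OF finite_Basis assms])

lemma sum_query_mass_le: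
  assumes "sq_norm register \<psi> = 1" and "\<And>x. x \<in> inputs \<Longrightarrow> card (S \<inter> set (blocks d n x)) \<le> c"
    and "finite S"
  shows "(\<Sum>p\<in>S. query_mass \<psi> p) \<le> c"
proof -
  have "(\<Sum>p\<in>S. query_mass \<psi> p) \<le> c * (\<Sum>x\<in>inputs. fiber_sq_norm targets x \<psi>)"
    unfolding query_mass_def
    by (rule sum_hit_mass_le[OF finite_inputs assms(3) fiber_sq_norm_nonneg assms(2)])
  also have "(\<Sum>x\<in>inputs. fiber_sq_norm targets x \<psi>) = 1"
    using assms(1) by (simp add: register_eq sq_norm_Times finite_inputs finite_target_space)
  finally show ?thesis
    by simp
qed

lemma norm_inner_prod_query_yes_no_ge:
  assumes "\<pi> \<in> placements" and "i < k" and "t > 0"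
  shows "cmod (inner_prod register (query_op (yes_oracle \<pi>) \<psi>) (query_op (no_oracle \<pi> i) \<phi>))
    \<ge> cmod (inner_prod register \<psi> \<phi>) - (t * query_mass \<psi> (\<pi> i) + query_mass \<phi> (\<pi> i) / t)"
proof -
  let ?H = "{x \<in> inputs. \<pi> i \<in> set (blocks d n x)}"
  have "\<forall>x\<in>inputs - ?H. yes_oracle \<pi> x = no_oracle \<pi> i x"
    using yes_no_oracle_agree[OF assms(1,2)] by blast
  moreover have "\<forall>x\<in>inputs. length (yes_oracle \<pi> x) = d * m" "\<forall>x\<in>inputs. length (no_oracle \<pi> i x) = d * m"
    using valid_yes_oracle[OF assms(1)] valid_no_oracle[OF assms(1)] by (simp_all add: valid_oracle_def)
  ultimately have "cmod (inner_prod register (query_op (yes_oracle \<pi>) \<psi>) (query_op (no_oracle \<pi> i) \<phi>))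
    \<ge> cmod (inner_prod register \<psi> \<phi>) - (\<Sum>x\<in>?H. t * fiber_sq_norm targets x \<psi> + fiber_sq_norm targets x \<phi> / t)"
    unfolding register_eq by (intro norm_inner_prod_query_op_ge[OF finite_inputs _ _ _ _ assms(3)]) auto
  also have "(\<Sum>x\<in>?H. t * fiber_sq_norm targets x \<psi> + fiber_sq_norm targets x \<phi> / t)
      = t * query_mass \<psi> (\<pi> i) + query_mass \<phi> (\<pi> i) / t"
    by (simp add: query_mass_def sum.distrib sum_distrib_left sum_divide_distrib)
  finally show ?thesis .
qed

lemma sum_query_mass_yes_le:
  assumes "normalized \<Psi>" and "\<pi> \<in> placements"
  shows "(\<Sum>i<k. query_mass (\<Psi> (yes_oracle \<pi>)) (\<pi> i)) \<le> min d k"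
proof -
  have "(\<Sum>i<k. query_mass (\<Psi> (yes_oracle \<pi>)) (\<pi> i)) = (\<Sum>p\<in>\<pi> ` {..<k}. query_mass (\<Psi> (yes_oracle \<pi>)) p)"
    using placement_inj_on[OF assms(2) order_refl] by (simp add: sum.reindex)
  also have "\<dots> \<le> min d k"
  proof (rule sum_query_mass_le)
    show "sq_norm register (\<Psi> (yes_oracle \<pi>)) = 1"
      using assms by (simp add: normalized_def valid_yes_oracle)
    fix x
    have "card (\<pi> ` {..<k} \<inter> set (blocks d n x)) \<le> card (set (blocks d n x))"
      by (simp add: card_mono)
    moreover have "card (\<pi> ` {..<k} \<inter> set (blocks d n x)) \<le> card (\<pi> ` {..<k})"
      by (simp add: card_mono)
    ultimately show "card (\<pi> ` {..<k} \<inter> set (blocks d n x)) \<le> min d k"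
      using card_set_blocks_le[of d n x] card_image_le[of "{..<k}" \<pi>] by simp
  qed simp
  finally show ?thesis .
qed

lemma sum_query_mass_no_le:
  assumes "normalized \<Psi>" and "i < k"
  shows "real (2 ^ n - (k - 1)) * (\<Sum>\<pi>\<in>placements. query_mass (\<Psi> (no_oracle \<pi> i)) (\<pi> i))
    \<le> real d * card placements"
proof -
  have "real (card {p :: bool list. length p = n} - (card {..<k} - 1))
      * (\<Sum>\<pi>\<in>placements. query_mass (\<Psi> (no_oracle \<pi> i)) (\<pi> i)) \<le> real d * card placements"
  proof (rule sum_inj_maps_at_le)
    fix \<pi> assume \<pi>: "\<pi> \<in> placements"
    show "(\<Sum>j\<in>{p. length p = n} - \<pi> ` ({..<k} - {i}). query_mass (\<Psi> (no_oracle \<pi> i)) j) \<le> d"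
    proof (rule sum_query_mass_le)
      show "sq_norm register (\<Psi> (no_oracle \<pi> i)) = 1"
        using assms(1) \<pi> by (simp add: normalized_def valid_no_oracle)
    qed (simp_all add: card_set_blocks_le card_mono[OF _ Int_lower2, THEN order_trans] finite_lists_length)
  next
    fix \<pi> j
    show "query_mass (\<Psi> (no_oracle (\<pi>(i := j)) i)) = query_mass (\<Psi> (no_oracle \<pi> i))"
      by (simp only: no_oracle_fun_upd)
  qed (use assms(2) in \<open>simp_all add: finite_lists_length\<close>)
  then show ?thesis
    by (simp add: card_lists_length)
qed

lemma progress_query_op:
  assumes "normalized \<Psi>" and "t > 0"
  shows "progress (\<lambda>F. query_op F (\<Psi> F)) \<ge> progress \<Psi> - query_cost t"
proof -
  define M where "M = real (2 ^ n - (k - 1))"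
  have "M > 0"
    using free_points_pos by (simp add: M_def)
  let ?yes = "\<lambda>\<pi> i. query_mass (\<Psi> (yes_oracle \<pi>)) (\<pi> i)"
  let ?no = "\<lambda>\<pi> i. query_mass (\<Psi> (no_oracle \<pi> i)) (\<pi> i)"
  define Y where "Y = (\<Sum>\<pi>\<in>placements. \<Sum>i<k. ?yes \<pi> i)"
  define Z where "Z = (\<Sum>i<k. \<Sum>\<pi>\<in>placements. ?no \<pi> i)"
  have Y: "Y \<le> card placements * min d k"
    unfolding Y_def using sum_mono[OF sum_query_mass_yes_le[OF assms(1)]] by simp
  have "(\<Sum>\<pi>\<in>placements. ?no \<pi> i) \<le> d * card placements / M" if "i < k" for i
    using sum_query_mass_no_le[OF assms(1) that] \<open>M > 0\<close> by (simp add: M_def field_simps)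
  then have "Z \<le> (\<Sum>i<k. d * card placements / M)"
    unfolding Z_def by (intro sum_mono) simp
  then have Z: "Z \<le> k * (d * card placements / M)"
    by simp
  have "progress \<Psi> - (\<Sum>\<pi>\<in>placements. \<Sum>i<k. t * ?yes \<pi> i + ?no \<pi> i / t)
      \<le> progress (\<lambda>F. query_op F (\<Psi> F))"
    unfolding progress_def sum_subtractf[symmetric]
    using norm_inner_prod_query_yes_no_ge[OF _ _ assms(2)] by (intro sum_mono) auto
  also have "(\<Sum>\<pi>\<in>placements. \<Sum>i<k. t * ?yes \<pi> i + ?no \<pi> i / t) = t * Y + Z / t"
    unfolding Y_def Z_def sum.swap[of _ "{..<k}"]
    by (simp add: sum.distrib sum_distrib_left sum_divide_distrib)
  finally have "progress \<Psi> - (t * Y + Z / t) \<le> progress (\<lambda>F. query_op F (\<Psi> F))" .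
  moreover have "t * Y + Z / t \<le> query_cost t"
  proof -
    have "t * Y + Z / t \<le> t * (card placements * min d k) + k * (d * card placements / M) / t"
      using Y Z assms(2) by (intro add_mono mult_left_mono divide_right_mono) simp_all
    also have "\<dots> = query_cost t"
      using assms(2) \<open>M > 0\<close> by (simp add: query_cost_def M_def field_simps)
    finally show ?thesis .
  qed
  ultimately show ?thesis
    by linarith
qed

lemma progress_run:
  assumes "length Us = Suc T" and "\<forall>U\<in>set Us. unitary_on register U" and "normalized \<Psi>" and "t > 0"
  shows "progress (\<lambda>F. run register F Us (\<Psi> F)) \<ge> progress \<Psi> - T * query_cost t"
  using assms(1-3)
proof (induction T arbitrary: Us \<Psi>)
  case 0
  from 0(1) obtain U where "Us = [U]"
    by (auto simp: length_Suc_conv)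
  with 0 show ?case
    by (simp add: progress_apply_op)
next
  case (Suc T)
  from Suc.prems(1) obtain U V Us' where Us: "Us = U # V # Us'"
    by (auto simp: length_Suc_conv)
  let ?\<Psi>' = "\<lambda>F. query_op F (apply_op register U (\<Psi> F))"
  have U: "unitary_on register U"
    using Suc.prems(2) Us by simp
  have "progress ?\<Psi>' \<ge> progress \<Psi> - query_cost t"
    using progress_query_op[OF normalized_apply_op[OF U Suc.prems(3)] assms(4)]
    by (simp add: progress_apply_op[OF U])
  moreover have "progress (\<lambda>F. run register F (V # Us') (?\<Psi>' F)) \<ge> progress ?\<Psi>' - T * query_cost t"
    using Suc.IH[of "V # Us'" ?\<Psi>'] Suc.prems Us U by (simp add: normalized_apply_op normalized_query_op)
  ultimately show ?case
    using Us by (simp add: algebra_simps)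
qed

lemma progress_le_if_distinguished:
  assumes "normalized \<Psi>"
    and "\<And>\<pi>. \<pi> \<in> placements \<Longrightarrow> sq_norm (register \<inter> A) (\<Psi> (yes_oracle \<pi>)) \<ge> 3/4"
    and "\<And>\<pi> i. \<pi> \<in> placements \<Longrightarrow> i < k \<Longrightarrow> sq_norm (register \<inter> A) (\<Psi> (no_oracle \<pi> i)) \<le> 1/4"
  shows "progress \<Psi> \<le> 7/8 * (card placements * k)"
proof -
  have "progress \<Psi> \<le> (\<Sum>\<pi>\<in>placements. \<Sum>i<k. 7/8)"
    unfolding progress_def using assms
    by (intro sum_mono norm_inner_prod_le_if_distinguished[OF finite_Basis])
      (auto simp: normalized_def valid_yes_oracle valid_no_oracle)
  then show ?thesis
    by simp
qed

lemma query_trade_off: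
  assumes "solves n m d k T Ws Uss acc" and "Ws ys = W" and "t > 0"
  shows "card placements * k / 8 \<le> T * query_cost t"
proof -
  let ?Us = "Uss ys"
  define \<Psi> where "\<Psi> = (\<lambda>F. run register F ?Us (init_state d n m))"
  have W: "1 \<le> W" and length_Us: "length ?Us = Suc T" and U: "\<forall>U\<in>set ?Us. unitary_on register U"
    and correct: "\<And>f. valid_fun n m f \<Longrightarrow>
       (set ys \<subseteq> image_fun n f \<longrightarrow> accept_prob d n m W f ?Us (acc ys) \<ge> 3/4) \<and>
       (card (set ys \<inter> image_fun n f) = k - 1 \<longrightarrow> accept_prob d n m W f ?Us (acc ys) \<le> 1/4)"
    using assms(1,2) items unfolding solves_def by auto
  have "progress \<Psi> \<le> 7/8 * (card placements * k)"
  proof (rule progress_le_if_distinguished)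
    show "normalized \<Psi>"
      unfolding \<Psi>_def using U normalized_init[OF W] by (rule normalized_run)
    fix \<pi> assume \<pi>: "\<pi> \<in> placements"
    show "sq_norm (register \<inter> acc ys) (\<Psi> (yes_oracle \<pi>)) \<ge> 3/4"
      using correct[OF valid_planted_fun[OF \<pi> order_refl]] set_ys_subset_image_yes[OF \<pi>]
      by (simp add: \<Psi>_def yes_oracle_def accept_prob_eq_sq_norm)
    fix i assume "i < k"
    then show "sq_norm (register \<inter> acc ys) (\<Psi> (no_oracle \<pi> i)) \<le> 1/4"
      using correct[OF valid_planted_fun[OF \<pi>]] card_set_ys_Int_image_no[OF \<pi>]
      by (simp add: \<Psi>_def no_oracle_def accept_prob_eq_sq_norm)
  qed
  moreover have "progress \<Psi> \<ge> card placements * k - T * query_cost t"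
    using progress_run[OF length_Us U normalized_init[OF W] assms(3)]
    by (simp add: \<Psi>_def progress_init[OF W])
  ultimately show ?thesis
    by linarith
qed

lemma query_lower_bound:
  assumes "solves n m d k T Ws Uss acc" and "Ws ys = W" and "0 < d" and "0 < k" and "2 * (k - 1) \<le> 2 ^ n"
  shows "sqrt (2 ^ n * real k / (real d * real (min d k))) / 32 \<le> T"
proof (rule le_sqrt_of_trade_off)
  fix t :: real assume "0 < t"
  let ?c = "real T * (t * real (min d k) + real d * real k / (t * real (2 ^ n - (k - 1))))"
  have "card placements * (real k / 8) \<le> card placements * ?c"
    using query_trade_off[OF assms(1,2) \<open>0 < t\<close>] by (simp add: query_cost_def mult_ac)
  then show "real k / 8 \<le> ?c"
    using card_placements_pos by (simp only: mult_le_cancel_left_pos of_nat_0_less_iff)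
next
  have "2 ^ n \<le> 2 * (2 ^ n - (k - 1))"
    using assms(5) by linarith
  then show "2 ^ n \<le> 2 * real (2 ^ n - (k - 1))"
    by (metis of_nat_le_iff of_nat_mult of_nat_numeral of_nat_power)
  show "0 < real (2 ^ n - (k - 1))"
    using free_points_pos by (simp only: of_nat_0_less_iff)
qed (use assms(3,4) in simp_all)

end

theorem theorem1:
  shows "\<exists>c > (0::real). \<exists>N0::nat. \<forall>n m d k T W Us acc.
     0 < n \<and> 0 < m \<and> 0 < d \<and> 0 < k \<and> k \<le> 2 ^ (m - 1) \<and>
     N0 \<le> 2 ^ n \<and> real d \<le> sqrt (2 ^ n) \<and> real k \<le> sqrt (2 ^ n) \<and>
     solves n m d k T W Us acc
     \<longrightarrow> real T \<ge> c * sqrt (2 ^ n * real k / (real d * real (min d k)))"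
proof (intro exI[of _ "1/32"] exI[of _ 0] conjI allI impI)
  \<comment> \<open>the bound holds for every \<open>n\<close>; no largeness of \<open>N\<close> is needed\<close>
  fix n m d k T W Us acc
  assume "0 < n \<and> 0 < m \<and> 0 < d \<and> 0 < k \<and> k \<le> 2 ^ (m - 1) \<and> 0 \<le> 2 ^ n \<and>
    real d \<le> sqrt (2 ^ n) \<and> real k \<le> sqrt (2 ^ n) \<and> solves n m d k T W Us acc"
  then have m: "0 < m" and d: "0 < d" and k: "0 < k" "k \<le> 2 ^ (m - 1)" "real k \<le> sqrt (2 ^ n)"
    and solves: "solves n m d k T W Us acc"
    by auto
  obtain ys e where items: "valid_items m k ys" "length e = m" "e \<notin> set ys"
    using exists_items[OF m k(2)] .
  have "real k \<le> sqrt (real (2 ^ n))"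
    using k(3) by simp
  note k_bounds = le_of_le_sqrt[OF this]
  interpret hard_instances n m d k "W ys" ys e
    using items k_bounds(1) by unfold_locales
  show "1/32 * sqrt (2 ^ n * real k / (real d * real (min d k))) \<le> real T"
    using query_lower_bound[OF solves refl d k(1) k_bounds(2)] by simp
qed simp

end
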